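(* Let $G$ be a minimal DPDP-graph and let $(D,P)$ be a DP-pair in $G$. Then: (1) $D$ is a maximal independent set in $G$. (2) The induced subgraph $G[P]$ consists of independent edges, i.e., $\delta(G[P])=\Delta(G[P])=1$. (3) If $x\in P$, then $|N_G(x)\setminus P|=1$ or $N_G(x)\setminus P$ is a nonempty subset of the set $L_G$ of leaves of $G$. (4) $G$ is a 2-subdivision graph $S_2(H)$ of some graph $H$ (without isolated vertices, with respect to some function $\alpha$).
   Context: Graphs are finite and may have multiple edges and loops. A leaf is a vertex of degree one. A set $D\subseteq V(G)$ is dominating if every vertex outside $D$ has a neighbor in $D$; $P$ is paired-dominating if it is dominating and the subgraph induced by $P$ has a perfect matching. A DP-pair of $G$ is a pair $(D,P)$ of disjoint sets with $V(G)=D\cup P$, $D$ dominating and $P$ paired-dominating. A DPDP-graph is a graph with a DP-pair; a minimal DPDP-graph is a DPDP-graph no proper spanning subgraph of which is a DPDP-graph. 2-subdivision graph: for a graph $H$ with no isolated vertex, set of leaves $L_H$, and $\alpha:L_H\to\mathbb{N}=\{1,2,\dots\}$, $S_2(H)$ has vertex set $(V_H\setminus L_H)\cup\{(v,i): v\in L_H, 1\le i\le \alpha(v)\}$ together with two new vertices for each edge $e$ of $H$ ($u_e,v_e$ if $e$ joins $u\ne v$; $v_e^1,v_e^2$ if $e$ is a loop at $v$). Its edges are: the edge joining the two new vertices of each $e$; for $v\in V_H\setminus L_H$, $vv_e$ for each non-loop edge $e$ at $v$ and $vv_e^1,vv_e^2$ for each loop $e$ at $v$; for $v\in L_H$ with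 incident edge $e$, the edges $v_e(v,i)$, $1\le i\le\alpha(v)$. *)

theory Defs
  imports Main
begin

text \<open>Finite multigraphs with loops. Each edge has an (arbitrarily oriented)
pair of end vertices; the graph is undirected, orientation carries no meaning.
A loop is an edge whose two ends coincide.\<close>

record ('v,'e) mgraph =
  verts :: "'v set"
  edges :: "'e set"
  ends  :: "'e \<Rightarrow> 'v \<times> 'v"

definition wf_mgraph :: "('v,'e) mgraph \<Rightarrow> bool" where
  "wf_mgraph G \<longleftrightarrow> finite (verts G) \<and> finite (edges G) \<and>
     (\<forall>e\<in>edges G. fst (ends G e) \<in> verts G \<and> snd (ends G e) \<in> verts G)"

text \<open>Degree: loops count twice.\<close>
definition deg :: "('v,'e) mgraph \<Rightarrow> 'v \<Rightarrow> nat" where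
  "deg G v = card {e\<in>edges G. fst (ends G e) = v} + card {e\<in>edges G. snd (ends G e) = v}"

definition leaves :: "('v,'e) mgraph \<Rightarrow> 'v set" where
  "leaves G = {v\<in>verts G. deg G v = 1}"

definition adj :: "('v,'e) mgraph \<Rightarrow> 'v \<Rightarrow> 'v \<Rightarrow> bool" where
  "adj G u v \<longleftrightarrow> (\<exists>e\<in>edges G. ends G e = (u,v) \<or> ends G e = (v,u))"

definition nbhd :: "('v,'e) mgraph \<Rightarrow> 'v \<Rightarrow> 'v set" where
  "nbhd G v = {u\<in>verts G. adj G v u}"

definition induced :: "('v,'e) mgraph \<Rightarrow> 'v set \<Rightarrow> ('v,'e) mgraph" where
  "induced G S = \<lparr>verts = S,
     edges = {e\<in>edges G. fst (ends G e) \<in> S \<and> snd (ends G e) \<in> S},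
     ends = ends G\<rparr>"

definition dominating :: "('v,'e) mgraph \<Rightarrow> 'v set \<Rightarrow> bool" where
  "dominating G D \<longleftrightarrow> D \<subseteq> verts G \<and> (\<forall>v\<in>verts G - D. \<exists>u\<in>D. adj G v u)"

definition perfect_matching_induced :: "('v,'e) mgraph \<Rightarrow> 'v set \<Rightarrow> 'e set \<Rightarrow> bool" where
  "perfect_matching_induced G P M \<longleftrightarrow> M \<subseteq> edges G \<and>
     (\<forall>e\<in>M. fst (ends G e) \<in> P \<and> snd (ends G e) \<in> P \<and> fst (ends G e) \<noteq> snd (ends G e)) \<and>
     (\<forall>e\<in>M. \<forall>e'\<in>M. e \<noteq> e' \<longrightarrow>
        {fst (ends G e), snd (ends G e)} \<inter> {fst (ends G e'), snd (ends G e')} = {}) \<and>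
     (\<forall>x\<in>P. \<exists>e\<in>M. x = fst (ends G e) \<or> x = snd (ends G e))"

definition paired_dominating :: "('v,'e) mgraph \<Rightarrow> 'v set \<Rightarrow> bool" where
  "paired_dominating G P \<longleftrightarrow> dominating G P \<and> (\<exists>M. perfect_matching_induced G P M)"

definition dp_pair :: "('v,'e) mgraph \<Rightarrow> 'v set \<Rightarrow> 'v set \<Rightarrow> bool" where
  "dp_pair G D P \<longleftrightarrow> D \<inter> P = {} \<and> D \<union> P = verts G \<and> dominating G D \<and> paired_dominating G P"

definition dpdp_graph :: "('v,'e) mgraph \<Rightarrow> bool" where
  "dpdp_graph G \<longleftrightarrow> (\<exists>D P. dp_pair G D P)"

definition minimal_dpdp_graph :: "('v,'e) mgraph \<Rightarrow> bool" where
  "minimal_dpdp_graph G \<longleftrightarrow> dpdp_graph G \<and>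
     (\<forall>E'. E' \<subset> edges G \<longrightarrow> \<not> dpdp_graph (G\<lparr>edges := E'\<rparr>))"

definition independent :: "('v,'e) mgraph \<Rightarrow> 'v set \<Rightarrow> bool" where
  "independent G S \<longleftrightarrow> S \<subseteq> verts G \<and> (\<forall>u\<in>S. \<forall>v\<in>S. \<not> adj G u v)"

definition maximal_independent :: "('v,'e) mgraph \<Rightarrow> 'v set \<Rightarrow> bool" where
  "maximal_independent G S \<longleftrightarrow> independent G S \<and>
     (\<forall>T. independent G T \<and> S \<subseteq> T \<longrightarrow> T = S)"

definition mg_iso :: "('v,'e) mgraph \<Rightarrow> ('w,'f) mgraph \<Rightarrow> bool" where
  "mg_iso G K \<longleftrightarrow> (\<exists>f g. bij_betw f (verts G) (verts K) \<and> bij_betw g (edges G) (edges K) \<and>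
     (\<forall>e\<in>edges G. ends K (g e) = (f (fst (ends G e)), f (snd (ends G e))) \<or>
                  ends K (g e) = (f (snd (ends G e)), f (fst (ends G e)))))"

text \<open>For an edge e of H with ends (u,w), the two new
vertices are New e True (attached to u) and New e False (attached to w); for a
loop (u = w) these are v_e^1, v_e^2. A leaf v is replaced by copies LCopy v i,
1 <= i <= alpha v.\<close>

datatype ('a,'b) s2vert = Old 'a | LCopy 'a nat | New 'b bool
datatype ('a,'b) s2edge = EMid 'b | EAtt 'b bool | ELeaf 'b bool nat

definition endp :: "('a,'b) mgraph \<Rightarrow> bool \<Rightarrow> 'b \<Rightarrow> 'a" where
  "endp H b e = (if b then fst (ends H e) else snd (ends H e))"

definition S2 :: "('a,'b) mgraph \<Rightarrow> ('a \<Rightarrow> nat) \<Rightarrow> (('a,'b) s2vert, ('a,'b) s2edge) mgraph" where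
  "S2 H \<alpha> = \<lparr>
     verts = Old ` (verts H - leaves H)
             \<union> {LCopy v i | v i. v \<in> leaves H \<and> 1 \<le> i \<and> i \<le> \<alpha> v}
             \<union> {New e b | e b. e \<in> edges H},
     edges = EMid ` edges H
             \<union> {EAtt e b | e b. e \<in> edges H \<and> endp H b e \<notin> leaves H}
             \<union> {ELeaf e b i | e b i. e \<in> edges H \<and> endp H b e \<in> leaves H \<and> 1 \<le> i \<and> i \<le> \<alpha> (endp H b e)},
     ends = (\<lambda>x. case x of
               EMid e \<Rightarrow> (New e True, New e False)
             | EAtt e b \<Rightarrow> (Old (endp H b e), New e b)
             | ELeaf e b i \<Rightarrow> (LCopy (endp H b e) i, New e b))\<rparr>"

definition no_isolated :: "('v,'e) mgraph \<Rightarrow> bool" where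
  "no_isolated H \<longleftrightarrow> (\<forall>v\<in>verts H. deg H v \<noteq> 0)"

end

theory Submission
  imports Defs
begin

(* Minimality forbids deleting any edge while keeping the DP-pair (D, P) together with a perfect
   matching M of G[P]. Hence every edge lies in M or joins D to P (so D is independent and
   G[P] consists of the edges of M), and a D-P edge da is either the only edge at d or the only
   edge from a to D. Thus a vertex of P with two D-neighbours has only pendant D-neighbours, and
   a D-vertex with two P-neighbours is the only D-neighbour of each of them.
   Choose a D-neighbour anchor a of every a in P, and let H have the vertex set anchor ` P and,
   for each matching edge xy, an edge from anchor x to anchor y. Then G is S_2(H): the vertices of
   P are the subdivision vertices, the non-leaf vertices of H are the D-vertices with two
   P-neighbours, and a leaf w of H, the anchor of a single a in P, is replaced by the alpha w
   D-neighbours of a. *)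

section \<open>Multigraphs and 2-subdivisions\<close>

definition joins :: "('v,'e) mgraph \<Rightarrow> 'e \<Rightarrow> 'v \<Rightarrow> 'v \<Rightarrow> bool" where
  "joins G e x y \<longleftrightarrow> e \<in> edges G \<and> (ends G e = (x,y) \<or> ends G e = (y,x))"

lemma joins_sym: "joins G e x y \<Longrightarrow> joins G e y x"
  unfolding joins_def by auto

lemma adj_iff_joins: "adj G x y \<longleftrightarrow> (\<exists>e. joins G e x y)"
  unfolding adj_def joins_def by auto

lemma adj_sym: "adj G x y \<Longrightarrow> adj G y x"
  unfolding adj_iff_joins by (metis joins_sym)

lemma joins_endp: "e \<in> edges G \<Longrightarrow> joins G e (endp G b e) (endp G (\<not> b) e)"
  unfolding joins_def endp_def by (cases b) auto

lemma deg_eq_card_incidences: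
  assumes "finite (edges G)"
  shows "deg G v = card {(e,b). e \<in> edges G \<and> endp G b e = v}"
proof -
  let ?A = "{e\<in>edges G. fst (ends G e) = v}" and ?B = "{e\<in>edges G. snd (ends G e) = v}"
  have "{(e,b). e \<in> edges G \<and> endp G b e = v} = (\<lambda>e. (e,True)) ` ?A \<union> (\<lambda>e. (e,False)) ` ?B"
    unfolding endp_def by (auto split: if_splits)
  moreover have "card ((\<lambda>e. (e,True)) ` ?A \<union> (\<lambda>e. (e,False)) ` ?B) = card ?A + card ?B"
    using assms by (subst card_Un_disjoint) (auto simp: card_image inj_on_def)
  ultimately show ?thesis unfolding deg_def by simp
qed

lemma leaf_if_sole_edge:
  assumes "finite (edges G)" "v \<in> verts G" "joins G e v x" "x \<noteq> v"
    and sole: "\<And>e' y. joins G e' v y \<Longrightarrow> e' = e"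
  shows "v \<in> leaves G"
proof -
  obtain b where b: "endp G b e = v" "endp G (\<not> b) e \<noteq> v"
    using assms(3,4) unfolding joins_def endp_def by (metis (full_types) fst_conv snd_conv)
  have "{(e',b'). e' \<in> edges G \<and> endp G b' e' = v} = {(e,b)}"
  proof -
    have "e' = e \<and> b' = b" if "e' \<in> edges G" "endp G b' e' = v" for e' b'
    proof -
      have "e' = e" using sole joins_endp[OF that(1), of b'] that(2) by blast
      then show ?thesis using b that(2) by (cases b; cases b') auto
    qed
    then show ?thesis using b assms(3) unfolding joins_def by auto
  qed
  then show ?thesis
    unfolding leaves_def using assms(1,2) deg_eq_card_incidences by fastforce
qed

lemma bij_endp_perfect_matching:
  assumes "perfect_matching_induced G P M"
  shows "bij_betw (\<lambda>(m,b). endp G b m) (M \<times> UNIV) P"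
proof -
  have "inj_on (\<lambda>(m,b). endp G b m) (M \<times> UNIV)"
  proof (rule inj_onI, clarify)
    fix m b m' b' assume m: "m \<in> M" "m' \<in> M" and eq: "endp G b m = endp G b' m'"
    show "m = m' \<and> b = b'"
      using assms m eq unfolding perfect_matching_induced_def endp_def
      by (cases "m = m'") (auto split: if_splits)
  qed
  moreover have "(\<lambda>(m,b). endp G b m) ` (M \<times> UNIV) = P"
    using assms unfolding perfect_matching_induced_def endp_def image_def
    by auto (metis (full_types))
  ultimately show ?thesis unfolding bij_betw_def by blast
qed

lemma verts_S2_iff:
  "Old v \<in> verts (S2 H \<alpha>) \<longleftrightarrow> v \<in> verts H \<and> v \<notin> leaves H"
  "LCopy v i \<in> verts (S2 H \<alpha>) \<longleftrightarrow> v \<in> leaves H \<and> i \<in> {1..\<alpha> v}"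
  "New e b \<in> verts (S2 H \<alpha>) \<longleftrightarrow> e \<in> edges H"
  unfolding S2_def by auto

lemma edges_S2_iff:
  "EMid e \<in> edges (S2 H \<alpha>) \<longleftrightarrow> e \<in> edges H"
  "EAtt e b \<in> edges (S2 H \<alpha>) \<longleftrightarrow> e \<in> edges H \<and> endp H b e \<notin> leaves H"
  "ELeaf e b i \<in> edges (S2 H \<alpha>) \<longleftrightarrow>
     e \<in> edges H \<and> endp H b e \<in> leaves H \<and> i \<in> {1..\<alpha> (endp H b e)}"
  unfolding S2_def by auto

lemma ends_S2 [simp]:
  "ends (S2 H \<alpha>) (EMid e) = (New e True, New e False)"
  "ends (S2 H \<alpha>) (EAtt e b) = (Old (endp H b e), New e b)"
  "ends (S2 H \<alpha>) (ELeaf e b i) = (LCopy (endp H b e) i, New e b)"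
  unfolding S2_def by simp_all

lemma ends_S2_inj: "ends (S2 H \<alpha>) x = ends (S2 H \<alpha>) y \<Longrightarrow> x = y"
  by (cases x; cases y) auto

lemma ends_S2_not_swapped: "ends (S2 H \<alpha>) x \<noteq> prod.swap (ends (S2 H \<alpha>) y)"
  by (cases x; cases y) auto

lemma wf_mgraph_S2:
  assumes "wf_mgraph H"
  shows "wf_mgraph (S2 H \<alpha>)"
proof -
  have fin: "finite (verts H)" "finite (edges H)" and ends_H: "\<And>e b. e \<in> edges H \<Longrightarrow> endp H b e \<in> verts H"
    using assms unfolding wf_mgraph_def endp_def by auto
  have fin_L: "finite (leaves H)" using fin unfolding leaves_def by simp
  have "verts (S2 H \<alpha>) = Old ` (verts H - leaves H) \<union> (\<Union>v\<in>leaves H. LCopy v ` {1..\<alpha> v})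
      \<union> (\<lambda>(e,b). New e b) ` (edges H \<times> UNIV)"
    unfolding S2_def by auto
  then have fin_V: "finite (verts (S2 H \<alpha>))" using fin fin_L by simp
  have "edges (S2 H \<alpha>) \<subseteq> EMid ` edges H \<union> (\<lambda>(e,b). EAtt e b) ` (edges H \<times> UNIV)
      \<union> (\<Union>(e,b)\<in>edges H \<times> UNIV. ELeaf e b ` {1..\<alpha> (endp H b e)})"
    unfolding S2_def by (auto simp: image_iff)
  then have fin_E: "finite (edges (S2 H \<alpha>))" by (rule finite_subset) (simp add: fin)
  have "fst (ends (S2 H \<alpha>) x) \<in> verts (S2 H \<alpha>) \<and> snd (ends (S2 H \<alpha>) x) \<in> verts (S2 H \<alpha>)"
    if "x \<in> edges (S2 H \<alpha>)" for x
    using that ends_H by (cases x) (auto simp: verts_S2_iff edges_S2_iff)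
  with fin_V fin_E show ?thesis unfolding wf_mgraph_def by blast
qed

lemma mg_iso_sym:
  assumes "wf_mgraph G" "mg_iso G K"
  shows "mg_iso K G"
proof -
  obtain f g where f: "bij_betw f (verts G) (verts K)" and g: "bij_betw g (edges G) (edges K)"
    and compat: "\<forall>e\<in>edges G. ends K (g e) = (f (fst (ends G e)), f (snd (ends G e))) \<or>
                  ends K (g e) = (f (snd (ends G e)), f (fst (ends G e)))"
    using assms(2) unfolding mg_iso_def by blast
  let ?f' = "inv_into (verts G) f" and ?g' = "inv_into (edges G) g"
  have "ends G (?g' e) = (?f' (fst (ends K e)), ?f' (snd (ends K e))) \<or>
        ends G (?g' e) = (?f' (snd (ends K e)), ?f' (fst (ends K e)))" if e: "e \<in> edges K" for e
  proof -
    have e': "?g' e \<in> edges G" "g (?g' e) = e"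
      using g e by (auto simp: bij_betw_def inv_into_into f_inv_into_f)
    obtain p q where pq: "ends G (?g' e) = (p,q)" by fastforce
    then have "p \<in> verts G" "q \<in> verts G" using assms(1) e'(1) unfolding wf_mgraph_def by force+
    then have "?f' (f p) = p" "?f' (f q) = q" using f by (simp_all add: bij_betw_def inv_into_f_f)
    then show ?thesis using compat e' pq by force
  qed
  then show ?thesis unfolding mg_iso_def using f g by (blast intro: bij_betw_inv_into)
qed

lemma inj_on_compatible_edge_map:
  assumes "wf_mgraph K" "inj_on f (verts K)"
    and simple: "\<And>x y. ends K x = ends K y \<or> ends K x = prod.swap (ends K y) \<Longrightarrow> x = y"
    and compat: "\<And>x. x \<in> edges K \<Longrightarrow> joins G (g x) (f (fst (ends K x))) (f (snd (ends K x)))"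
  shows "inj_on g (edges K)"
proof (rule inj_onI)
  fix x y assume x: "x \<in> edges K" and y: "y \<in> edges K" and eq: "g x = g y"
  obtain p q p' q' where pq: "ends K x = (p,q)" "ends K y = (p',q')" by fastforce
  have "p \<in> verts K" "q \<in> verts K" "p' \<in> verts K" "q' \<in> verts K"
    using assms(1) x y pq unfolding wf_mgraph_def by force+
  moreover have "(f p = f p' \<and> f q = f q') \<or> (f p = f q' \<and> f q = f p')"
    using compat[OF x] compat[OF y] pq eq unfolding joins_def by auto
  ultimately have "(p = p' \<and> q = q') \<or> (p = q' \<and> q = p')"
    using assms(2) unfolding inj_on_def by blast
  then show "x = y" using simple pq by auto
qed

lemma card_preimage_bij_betw:
  assumes "bij_betw h A B"
  shows "card {y\<in>A. g (h y) = v} = card {z\<in>B. g z = v}"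
proof -
  have "bij_betw h {y\<in>A. g (h y) = v} {z\<in>B. g z = v}"
    using assms unfolding bij_betw_def inj_on_def by auto
  then show ?thesis by (rule bij_betw_same_card)
qed

section \<open>Structure of a DP-pair in a minimal DPDP-graph\<close>

locale minimal_dp_pair =
  fixes G :: "('v,'e) mgraph" and D P :: "'v set" and M :: "'e set"
  assumes wf: "wf_mgraph G" and minimal: "minimal_dpdp_graph G" and dp: "dp_pair G D P"
    and matching: "perfect_matching_induced G P M"
begin

lemma D_P_disjoint: "D \<inter> P = {}" and D_P_cover: "D \<union> P = verts G"
  using dp unfolding dp_pair_def by auto

lemma finite_verts: "finite (verts G)" and finite_edges: "finite (edges G)"
  using wf unfolding wf_mgraph_def by auto

lemma finite_P: "finite P"
  using finite_verts D_P_cover by (metis finite_Un)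

lemma joins_in_D_or_P: "joins G e x y \<Longrightarrow> (x \<in> D \<or> x \<in> P) \<and> (y \<in> D \<or> y \<in> P)"
  using wf D_P_cover unfolding wf_mgraph_def joins_def by (metis Un_iff fst_conv snd_conv)

lemma P_has_D_nbr: "a \<in> P \<Longrightarrow> \<exists>d\<in>D. \<exists>e. joins G e a d"
  using dp D_P_disjoint D_P_cover unfolding dp_pair_def dominating_def adj_iff_joins by blast

lemma D_has_P_nbr: "d \<in> D \<Longrightarrow> \<exists>a\<in>P. \<exists>e. joins G e d a"
  using dp D_P_disjoint D_P_cover
  unfolding dp_pair_def paired_dominating_def dominating_def adj_iff_joins by blast

lemma matching_subset: "M \<subseteq> edges G"
  using matching unfolding perfect_matching_induced_def by blast

lemma finite_M: "finite M"
  using finite_subset[OF matching_subset finite_edges] .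

lemma bij_endp: "bij_betw (\<lambda>(m,b). endp G b m) (M \<times> UNIV) P"
  using matching by (rule bij_endp_perfect_matching)

lemma endp_in_P: "m \<in> M \<Longrightarrow> endp G b m \<in> P"
  using bij_betwE[OF bij_endp] by fastforce

lemma joins_matching_in_P: "joins G m x y \<Longrightarrow> m \<in> M \<Longrightarrow> x \<in> P \<and> y \<in> P"
  using endp_in_P[of m True] endp_in_P[of m False] unfolding joins_def endp_def by auto

lemma no_redundant_edge:
  assumes e: "e \<in> edges G" "e \<notin> M"
    and P_dom: "\<And>a. a \<in> P \<Longrightarrow> \<exists>d\<in>D. \<exists>e'. e' \<noteq> e \<and> joins G e' a d"
    and D_dom: "\<And>d. d \<in> D \<Longrightarrow> \<exists>a\<in>P. \<exists>e'. e' \<noteq> e \<and> joins G e' d a"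
  shows False
proof -
  let ?G' = "G\<lparr>edges := edges G - {e}\<rparr>"
  have adj': "adj ?G' x y" if "e' \<noteq> e" "joins G e' x y" for e' x y
    using that unfolding adj_def joins_def by auto
  have "dominating ?G' D" unfolding dominating_def
  proof (intro conjI ballI)
    fix v assume "v \<in> verts ?G' - D"
    then have "v \<in> P" using D_P_cover by auto
    then show "\<exists>d\<in>D. adj ?G' v d" using P_dom adj' by blast
  qed (use D_P_cover in auto)
  moreover have "dominating ?G' P" unfolding dominating_def
  proof (intro conjI ballI)
    fix v assume "v \<in> verts ?G' - P"
    then have "v \<in> D" using D_P_cover by auto
    then show "\<exists>a\<in>P. adj ?G' v a" using D_dom adj' by blast
  qed (use D_P_cover in auto)
  moreover have "perfect_matching_induced ?G' P M"
    using matching e(2) unfolding perfect_matching_induced_def by auto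
  ultimately have "dpdp_graph ?G'"
    using D_P_disjoint D_P_cover
    unfolding dpdp_graph_def dp_pair_def paired_dominating_def by auto
  moreover have "edges G - {e} \<subset> edges G" using e(1) by blast
  ultimately show False using minimal unfolding minimal_dpdp_graph_def by auto
qed

lemma edge_in_matching_or_DP:
  assumes e: "e \<in> edges G"
  shows "e \<in> M \<or> (\<exists>d\<in>D. \<exists>a\<in>P. joins G e d a)"
proof (rule ccontr)
  assume "\<not> ?thesis"
  then have not_M: "e \<notin> M" and not_DP: "\<And>d a. d \<in> D \<Longrightarrow> a \<in> P \<Longrightarrow> \<not> joins G e d a"
    by auto
  show False
  proof (rule no_redundant_edge[OF e not_M])
    show "\<exists>d\<in>D. \<exists>e'. e' \<noteq> e \<and> joins G e' a d" if "a \<in> P" for a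
      using P_has_D_nbr[OF that] not_DP that joins_sym by metis
    show "\<exists>a\<in>P. \<exists>e'. e' \<noteq> e \<and> joins G e' d a" if "d \<in> D" for d
      using D_has_P_nbr[OF that] not_DP that by metis
  qed
qed

lemma no_edge_within_D: "joins G e x y \<Longrightarrow> x \<in> D \<Longrightarrow> y \<in> D \<Longrightarrow> False"
  using edge_in_matching_or_DP[of e] joins_matching_in_P[of e x y] D_P_disjoint
  unfolding joins_def by auto

lemma joins_D_imp_P: "joins G e d y \<Longrightarrow> d \<in> D \<Longrightarrow> y \<in> P"
  using no_edge_within_D joins_in_D_or_P by blast

lemma edge_within_P_in_matching: "joins G e x y \<Longrightarrow> x \<in> P \<Longrightarrow> y \<in> P \<Longrightarrow> e \<in> M"
  using edge_in_matching_or_DP[of e] D_P_disjoint unfolding joins_def by auto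

lemma joins_DP_unique_ends:
  "joins G e d a \<Longrightarrow> joins G e d' a' \<Longrightarrow> d \<in> D \<Longrightarrow> d' \<in> D \<Longrightarrow> a \<in> P \<Longrightarrow> a' \<in> P \<Longrightarrow> d = d' \<and> a = a'"
  using D_P_disjoint unfolding joins_def by auto

text \<open>Otherwise the edge could be deleted: its end in D would still be dominated by P
  through another edge, and its end in P would still be dominated by D.\<close>
lemma DP_edge_private:
  assumes e: "joins G e d a" and d: "d \<in> D" and a: "a \<in> P"
  shows "(\<forall>e' y. joins G e' d y \<longrightarrow> e' = e) \<or> (\<forall>e' d'. joins G e' a d' \<and> d' \<in> D \<longrightarrow> e' = e)"
proof (rule ccontr)
  assume "\<not> ?thesis"
  then obtain e1 y e2 d2 where e1: "joins G e1 d y" "e1 \<noteq> e" and e2: "joins G e2 a d2" "d2 \<in> D" "e2 \<noteq> e"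
    by blast
  have "e \<notin> M" using joins_matching_in_P[OF e] d D_P_disjoint by blast
  then show False
  proof (rule no_redundant_edge[rotated])
    show "e \<in> edges G" using e unfolding joins_def by blast
    show "\<exists>d\<in>D. \<exists>e'. e' \<noteq> e \<and> joins G e' a' d" if a': "a' \<in> P" for a'
    proof -
      obtain d' e' where "d' \<in> D" "joins G e' a' d'" using P_has_D_nbr[OF a'] by blast
      then show ?thesis
        using e2 joins_DP_unique_ends[OF e] d a a' joins_sym by metis
    qed
    show "\<exists>a\<in>P. \<exists>e'. e' \<noteq> e \<and> joins G e' d' a" if d': "d' \<in> D" for d'
    proof -
      obtain a' e' where "a' \<in> P" "joins G e' d' a'" using D_has_P_nbr[OF d'] by blast
      then show ?thesis
        using e1 joins_D_imp_P[OF e1(1) d] joins_DP_unique_ends[OF e] d a d' by metis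
    qed
  qed
qed

lemma DP_edge_unique: "joins G e d a \<Longrightarrow> joins G e' d a \<Longrightarrow> d \<in> D \<Longrightarrow> a \<in> P \<Longrightarrow> e' = e"
  using DP_edge_private joins_sym by metis

definition D_nbhd :: "'v \<Rightarrow> 'v set" where
  "D_nbhd a = {d\<in>D. adj G a d}"

lemma mem_D_nbhd: "d \<in> D_nbhd a \<longleftrightarrow> d \<in> D \<and> adj G d a"
  unfolding D_nbhd_def by (metis (no_types, lifting) adj_sym mem_Collect_eq)

lemma nbhd_minus_P: "nbhd G a - P = D_nbhd a"
  unfolding nbhd_def D_nbhd_def using D_P_cover D_P_disjoint by auto

lemma finite_D_nbhd: "finite (D_nbhd a)"
  using finite_verts D_P_cover unfolding D_nbhd_def by (auto intro: finite_subset)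

lemma D_nbhd_nonempty: "a \<in> P \<Longrightarrow> D_nbhd a \<noteq> {}"
  using P_has_D_nbr unfolding D_nbhd_def adj_iff_joins by blast

lemma sole_edge_if_two_D_nbrs:
  assumes a: "a \<in> P" and d: "d \<in> D_nbhd a" "d' \<in> D_nbhd a" "d \<noteq> d'"
    and e: "joins G e a d" and e': "joins G e' d y"
  shows "e' = e"
proof -
  have D: "d \<in> D" "d' \<in> D" using d unfolding D_nbhd_def by auto
  obtain e'' where e'': "joins G e'' a d'" using d(2) unfolding D_nbhd_def adj_iff_joins by blast
  have "e'' \<noteq> e"
  proof
    assume "e'' = e"
    then have "joins G e d' a" using joins_sym[OF e''] by simp
    then show False using joins_DP_unique_ends[OF joins_sym[OF e]] D a d(3) by blast
  qed
  then show ?thesis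
    using DP_edge_private[OF joins_sym[OF e] D(1) a] e' e'' D(2) by blast
qed

lemma D_nbr_leaf_if_two:
  assumes a: "a \<in> P" and d: "d \<in> D_nbhd a" "d' \<in> D_nbhd a" "d \<noteq> d'"
  shows "d \<in> leaves G"
proof -
  obtain e where e: "joins G e a d" using d(1) unfolding D_nbhd_def adj_iff_joins by blast
  have "a \<noteq> d" "d \<in> verts G" using a d(1) D_P_disjoint D_P_cover unfolding D_nbhd_def by auto
  then show ?thesis
    using leaf_if_sole_edge[OF finite_edges _ joins_sym[OF e]] sole_edge_if_two_D_nbrs[OF a d e]
    by blast
qed

lemma D_nbhd_singleton_if_shared:
  assumes d: "d \<in> D" and a: "a \<in> P" "a' \<in> P" "a \<noteq> a'" and adj: "adj G d a" "adj G d a'"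
  shows "D_nbhd a = {d}"
proof -
  have d_in: "d \<in> D_nbhd a" using d adj_sym[OF adj(1)] unfolding D_nbhd_def by blast
  obtain e where "joins G e d a" using adj(1) unfolding adj_iff_joins by blast
  note e = joins_sym[OF this]
  obtain e' where e': "joins G e' d a'" using adj(2) unfolding adj_iff_joins by blast
  have "d' = d" if d': "d' \<in> D_nbhd a" for d'
  proof (rule ccontr)
    assume "d' \<noteq> d"
    then have "e' = e" using sole_edge_if_two_D_nbrs[OF a(1) d_in d' _ e e'] by simp
    then have "joins G e d a'" using e' by simp
    then show False using joins_DP_unique_ends[OF joins_sym[OF e]] d a by blast
  qed
  then show ?thesis using d_in by blast
qed

lemma maximal_independent_D: "maximal_independent G D"
proof -
  have "independent G D"
    using no_edge_within_D D_P_cover unfolding independent_def adj_iff_joins by blast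
  moreover have "T = D" if "independent G T" "D \<subseteq> T" for T
  proof -
    have "a \<notin> T" if "a \<in> P" for a
      using P_has_D_nbr[OF that] \<open>independent G T\<close> \<open>D \<subseteq> T\<close>
      unfolding independent_def adj_iff_joins by blast
    then show ?thesis using that D_P_cover unfolding independent_def by blast
  qed
  ultimately show ?thesis unfolding maximal_independent_def by blast
qed

lemma edges_induced_P: "edges (induced G P) = M"
proof -
  have "e \<in> M" if "e \<in> edges G" "fst (ends G e) \<in> P" "snd (ends G e) \<in> P" for e
    using edge_within_P_in_matching[of e "fst (ends G e)" "snd (ends G e)"] that
    unfolding joins_def by simp
  then show ?thesis
    using matching_subset endp_in_P[of _ True] endp_in_P[of _ False]
    unfolding induced_def endp_def by auto
qed

lemma deg_induced_P: "x \<in> P \<Longrightarrow> deg (induced G P) x = 1"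
proof -
  assume x: "x \<in> P"
  have "endp (induced G P) = endp G" unfolding induced_def endp_def by (simp add: fun_eq_iff)
  then have "deg (induced G P) x = card {(m,b). m \<in> M \<and> endp G b m = x}"
    using finite_M by (simp add: deg_eq_card_incidences edges_induced_P)
  also have "{(m,b). m \<in> M \<and> endp G b m = x} = {y \<in> M \<times> UNIV. (\<lambda>(m,b). endp G b m) y = x}"
    by auto
  also have "card \<dots> = card {y\<in>P. y = x}"
    using card_preimage_bij_betw[OF bij_endp, of "\<lambda>y. y" x] by simp
  also have "{y\<in>P. y = x} = {x}" using x by auto
  finally show ?thesis by simp
qed

lemma nbhd_minus_P_single_or_leaves:
  assumes a: "a \<in> P"
  shows "card (nbhd G a - P) = 1 \<or> (nbhd G a - P \<noteq> {} \<and> nbhd G a - P \<subseteq> leaves G)"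
proof (cases "card (D_nbhd a) = 1")
  case False
  have "d \<in> leaves G" if d: "d \<in> D_nbhd a" for d
  proof -
    have "D_nbhd a \<noteq> {d}" using False by auto
    then obtain d' where "d' \<in> D_nbhd a" "d' \<noteq> d" using d by blast
    then show ?thesis using D_nbr_leaf_if_two[OF a d] by blast
  qed
  then show ?thesis using D_nbhd_nonempty[OF a] nbhd_minus_P by auto
qed (simp add: nbhd_minus_P)

lemma no_parallel_edges: "joins G e x y \<Longrightarrow> joins G e' x y \<Longrightarrow> e' = e"
proof -
  assume e: "joins G e x y" and e': "joins G e' x y"
  consider "e \<in> M" | d a where "d \<in> D" "a \<in> P" "joins G e d a"
    using edge_in_matching_or_DP[of e] e unfolding joins_def by blast
  then show "e' = e"
  proof cases
    case 1
    then have "x \<in> P" "y \<in> P" using joins_matching_in_P[OF e] by auto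
    then have "e' \<in> M" using edge_within_P_in_matching[OF e'] by blast
    show ?thesis
    proof (rule ccontr)
      assume "e' \<noteq> e"
      then have "{fst (ends G e), snd (ends G e)} \<inter> {fst (ends G e'), snd (ends G e')} = {}"
        using matching \<open>e \<in> M\<close> \<open>e' \<in> M\<close> unfolding perfect_matching_induced_def by blast
      then show False using e e' unfolding joins_def by auto
    qed
  next
    case 2
    then have "joins G e' d a" using e e' unfolding joins_def by auto
    then show ?thesis using DP_edge_unique 2 by blast
  qed
qed

section \<open>The graph H with G isomorphic to S_2(H)\<close>

definition anchor :: "'v \<Rightarrow> 'v" where
  "anchor a = (SOME d. d \<in> D_nbhd a)"

lemma anchor_in_D_nbhd: "a \<in> P \<Longrightarrow> anchor a \<in> D_nbhd a"
  unfolding anchor_def using D_nbhd_nonempty by (simp add: some_in_eq)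

lemma anchor_in_D: "a \<in> P \<Longrightarrow> anchor a \<in> D"
  using anchor_in_D_nbhd mem_D_nbhd by blast

lemma adj_anchor: "a \<in> P \<Longrightarrow> adj G (anchor a) a"
  using anchor_in_D_nbhd mem_D_nbhd by blast

definition skeleton :: "('v,'e) mgraph" where
  "skeleton = \<lparr>verts = anchor ` P, edges = M,
     ends = (\<lambda>m. (anchor (fst (ends G m)), anchor (snd (ends G m))))\<rparr>"

lemma skeleton_simps [simp]:
  "verts skeleton = anchor ` P" "edges skeleton = M"
  "endp skeleton b m = anchor (endp G b m)"
  unfolding skeleton_def endp_def by simp_all

lemma wf_skeleton: "wf_mgraph skeleton"
  using finite_P finite_M endp_in_P[of _ True] endp_in_P[of _ False]
  unfolding wf_mgraph_def skeleton_def endp_def by auto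

lemma deg_skeleton: "deg skeleton v = card {a\<in>P. anchor a = v}"
proof -
  have "deg skeleton v = card {(m,b). m \<in> M \<and> anchor (endp G b m) = v}"
    using finite_M by (simp add: deg_eq_card_incidences)
  also have "{(m,b). m \<in> M \<and> anchor (endp G b m) = v}
      = {y \<in> M \<times> UNIV. anchor ((\<lambda>(m,b). endp G b m) y) = v}"
    by auto
  finally show ?thesis using card_preimage_bij_betw[OF bij_endp] by simp
qed

lemma no_isolated_skeleton: "no_isolated skeleton"
  unfolding no_isolated_def deg_skeleton
  using finite_P by (auto simp: card_eq_0_iff)

lemma anchored_unique_at_leaf:
  assumes "w \<in> leaves skeleton" "a \<in> P" "a' \<in> P" "anchor a = w" "anchor a' = w"
  shows "a = a'"
proof -
  have "card {a\<in>P. anchor a = w} = 1" using assms(1) unfolding leaves_def deg_skeleton by simp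
  then obtain x where "{a\<in>P. anchor a = w} = {x}" by (rule card_1_singletonE)
  then show ?thesis using assms(2-) by (metis (mono_tags, lifting) mem_Collect_eq singletonD)
qed

lemma two_anchored_at_nonleaf:
  assumes "v \<in> verts skeleton" "v \<notin> leaves skeleton"
  obtains a a' where "a \<in> P" "a' \<in> P" "a \<noteq> a'" "anchor a = v" "anchor a' = v"
proof -
  obtain a where a: "a \<in> P" "anchor a = v" using assms(1) by auto
  have "{a'\<in>P. anchor a' = v} \<noteq> {a}"
    using assms unfolding leaves_def deg_skeleton by auto
  then obtain a' where "a' \<in> P" "anchor a' = v" "a' \<noteq> a" using a by blast
  then show ?thesis using a that by blast
qed

lemma D_nbhd_at_nonleaf:
  assumes v: "v \<in> verts skeleton" "v \<notin> leaves skeleton" and a: "a \<in> P" "adj G v a"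
  shows "D_nbhd a = {v}"
proof -
  obtain b b' where b: "b \<in> P" "b' \<in> P" "b \<noteq> b'" "anchor b = v" "anchor b' = v"
    using two_anchored_at_nonleaf[OF v] by blast
  have "v \<in> D" "adj G v b" "adj G v b'"
    using anchor_in_D[OF b(1)] adj_anchor[OF b(1)] adj_anchor[OF b(2)] b(4,5) by simp_all
  then show ?thesis
    using D_nbhd_singleton_if_shared[OF _ a(1)] a b by (cases "a = b") blast+
qed

lemma anchor_at_nonleaf:
  "v \<in> verts skeleton \<Longrightarrow> v \<notin> leaves skeleton \<Longrightarrow> a \<in> P \<Longrightarrow> adj G v a \<Longrightarrow> anchor a = v"
  using D_nbhd_at_nonleaf anchor_in_D_nbhd by blast

definition partner :: "'v \<Rightarrow> 'v" where
  "partner w = (SOME a. a \<in> P \<and> anchor a = w)"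

lemma partner_anchored: "w \<in> verts skeleton \<Longrightarrow> partner w \<in> P \<and> anchor (partner w) = w"
  unfolding partner_def by (rule someI_ex) auto

lemma partner_at_leaf: "w \<in> leaves skeleton \<Longrightarrow> a \<in> P \<Longrightarrow> anchor a = w \<Longrightarrow> partner w = a"
  using anchored_unique_at_leaf partner_anchored unfolding leaves_def by blast

definition mult :: "'v \<Rightarrow> nat" where
  "mult w = card (D_nbhd (partner w))"

definition copy :: "'v \<Rightarrow> nat \<Rightarrow> 'v" where
  "copy w = (SOME h. bij_betw h {1..mult w} (D_nbhd (partner w)))"

lemma bij_copy: "bij_betw (copy w) {1..mult w} (D_nbhd (partner w))"
  using ex_bij_betw_nat_finite_1[OF finite_D_nbhd] unfolding copy_def mult_def by (rule someI_ex)

lemma mult_pos: "w \<in> leaves skeleton \<Longrightarrow> 1 \<le> mult w"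
  using partner_anchored D_nbhd_nonempty finite_D_nbhd unfolding mult_def leaves_def
  by (simp add: Suc_le_eq card_gt_0_iff)

lemma nonleaf_not_in_leaf_block:
  assumes v: "v \<in> verts skeleton" "v \<notin> leaves skeleton" and w: "w \<in> leaves skeleton"
  shows "v \<notin> D_nbhd (partner w)"
proof
  assume "v \<in> D_nbhd (partner w)"
  then have "adj G v (partner w)" using mem_D_nbhd by blast
  moreover have "partner w \<in> P" "anchor (partner w) = w" using w partner_anchored unfolding leaves_def by auto
  ultimately have "w = v" using anchor_at_nonleaf[OF v] by metis
  then show False using v w by simp
qed

lemma leaf_blocks_disjoint:
  assumes w: "w \<in> leaves skeleton" "w' \<in> leaves skeleton"
    and d: "d \<in> D_nbhd (partner w)" "d \<in> D_nbhd (partner w')"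
  shows "w = w'"
proof -
  have p: "partner w \<in> P" "anchor (partner w) = w" "partner w' \<in> P" "anchor (partner w') = w'"
    using w partner_anchored unfolding leaves_def by auto
  show ?thesis
  proof (cases "partner w = partner w'")
    case False
    have dD: "d \<in> D" and adj: "adj G d (partner w)" "adj G d (partner w')"
      using d mem_D_nbhd by auto
    have "D_nbhd (partner w) = {d}" "D_nbhd (partner w') = {d}"
      using D_nbhd_singleton_if_shared[OF dD p(1) p(3) False adj]
        D_nbhd_singleton_if_shared[OF dD p(3) p(1) not_sym[OF False] adj(2,1)] by auto
    then have "w = d" "w' = d"
      using anchor_in_D_nbhd[OF p(1)] anchor_in_D_nbhd[OF p(3)] p(2,4) by auto
    then show ?thesis by simp
  qed (use p in metis)
qed

lemma D_cover_skeleton: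
  assumes d: "d \<in> D"
  shows "d \<in> verts skeleton - leaves skeleton \<or> (\<exists>w\<in>leaves skeleton. d \<in> D_nbhd (partner w))"
proof (cases "d \<in> verts skeleton")
  case True
  then have "d \<in> D_nbhd (partner d)" using partner_anchored anchor_in_D_nbhd by metis
  then show ?thesis using True by blast
next
  case False
  obtain a where a: "a \<in> P" "adj G d a"
    using D_has_P_nbr[OF d] unfolding adj_iff_joins by blast
  then have d_in: "d \<in> D_nbhd a" using d mem_D_nbhd by blast
  have w: "anchor a \<in> verts skeleton" using a by simp
  have "anchor a \<in> leaves skeleton"
  proof (rule ccontr)
    assume "anchor a \<notin> leaves skeleton"
    then have "d = anchor a" using D_nbhd_at_nonleaf[OF w _ a(1) adj_anchor[OF a(1)]] d_in by blast
    then show False using False w by simp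
  qed
  moreover from this have "partner (anchor a) = a" using partner_at_leaf a(1) by blast
  ultimately show ?thesis using d_in by metis
qed

abbreviation S2_skeleton :: "(('v,'e) s2vert, ('v,'e) s2edge) mgraph" where
  "S2_skeleton \<equiv> S2 skeleton mult"

definition vmap :: "('v,'e) s2vert \<Rightarrow> 'v" where
  "vmap x = (case x of Old v \<Rightarrow> v | LCopy w i \<Rightarrow> copy w i | New m b \<Rightarrow> endp G b m)"

lemma vmap_simps [simp]:
  "vmap (Old v) = v" "vmap (LCopy w i) = copy w i" "vmap (New m b) = endp G b m"
  unfolding vmap_def by simp_all

definition link :: "'v \<Rightarrow> 'v \<Rightarrow> 'e" where
  "link x y = (SOME e. joins G e x y)"

lemma joins_link: "adj G x y \<Longrightarrow> joins G (link x y) x y"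
  unfolding link_def adj_iff_joins by (rule someI_ex)

text \<open>As G has no parallel edges, this is the only edge of G joining the images of the ends.\<close>
definition emap :: "('v,'e) s2edge \<Rightarrow> 'e" where
  "emap x = link (vmap (fst (ends S2_skeleton x))) (vmap (snd (ends S2_skeleton x)))"

lemma copy_in_block: "i \<in> {1..mult w} \<Longrightarrow> copy w i \<in> D_nbhd (partner w)"
  using bij_copy bij_betwE by blast

lemma copy_inj: "i \<in> {1..mult w} \<Longrightarrow> j \<in> {1..mult w} \<Longrightarrow> copy w i = copy w j \<Longrightarrow> i = j"
  using bij_copy unfolding bij_betw_def inj_on_def by blast

lemma copy_in_D: "i \<in> {1..mult w} \<Longrightarrow> copy w i \<in> D"
  using copy_in_block mem_D_nbhd by blast

lemma vmap_in_P_iff: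
  assumes "x \<in> verts S2_skeleton"
  shows "vmap x \<in> P \<longleftrightarrow> (\<exists>m b. x = New m b)"
proof (cases x)
  case (Old v)
  then have "vmap x \<in> D" using assms anchor_in_D by (auto simp: verts_S2_iff)
  then show ?thesis using Old D_P_disjoint by auto
next
  case (LCopy w i)
  then have "vmap x \<in> D" using assms copy_in_D by (simp add: verts_S2_iff)
  then show ?thesis using LCopy D_P_disjoint by auto
qed (use assms endp_in_P in \<open>simp add: verts_S2_iff\<close>)

lemma Old_LCopy_vmap_neq:
  "Old v \<in> verts S2_skeleton \<Longrightarrow> LCopy w i \<in> verts S2_skeleton \<Longrightarrow> v \<noteq> copy w i"
  using nonleaf_not_in_leaf_block copy_in_block by (fastforce simp: verts_S2_iff)

lemma LCopy_vmap_inj: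
  assumes "LCopy w i \<in> verts S2_skeleton" "LCopy w' j \<in> verts S2_skeleton" "copy w i = copy w' j"
  shows "w = w' \<and> i = j"
proof -
  have w: "w \<in> leaves skeleton" "i \<in> {1..mult w}" "w' \<in> leaves skeleton" "j \<in> {1..mult w'}"
    using assms(1,2) by (simp_all add: verts_S2_iff)
  have "w = w'"
    using leaf_blocks_disjoint[OF w(1,3) copy_in_block[OF w(2)]] copy_in_block[OF w(4)] assms(3)
    by simp
  then show ?thesis using copy_inj w assms(3) by blast
qed

lemma inj_vmap: "inj_on vmap (verts S2_skeleton)"
proof (rule inj_onI)
  fix x y assume x: "x \<in> verts S2_skeleton" and y: "y \<in> verts S2_skeleton" and eq: "vmap x = vmap y"
  have "(\<exists>m b. x = New m b) \<longleftrightarrow> (\<exists>m b. y = New m b)"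
    using vmap_in_P_iff[OF x] vmap_in_P_iff[OF y] eq by simp
  then consider (P) m b m' b' where "x = New m b" "y = New m' b'"
    | (D) "\<nexists>m b. x = New m b" "\<nexists>m b. y = New m b"
    by blast
  then show "x = y"
  proof cases
    case P
    then have "(m,b) \<in> M \<times> UNIV" "(m',b') \<in> M \<times> UNIV" "endp G b m = endp G b' m'"
      using x y eq by (auto simp: verts_S2_iff)
    then have "(m,b) = (m',b')"
      by (intro inj_onD[OF bij_betw_imp_inj_on[OF bij_endp]]) simp_all
    then show ?thesis using P by simp
  next
    case D
    then show ?thesis
      using x y eq Old_LCopy_vmap_neq LCopy_vmap_inj
      by (cases x; cases y) (simp_all, metis+)
  qed
qed

lemma vmap_onto: "vmap ` verts S2_skeleton = verts G"
proof
  have "vmap x \<in> D \<union> P" if "x \<in> verts S2_skeleton" for x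
    using that anchor_in_D copy_in_D endp_in_P by (cases x) (auto simp: verts_S2_iff)
  then show "vmap ` verts S2_skeleton \<subseteq> verts G" using D_P_cover by blast
  show "verts G \<subseteq> vmap ` verts S2_skeleton"
  proof
    fix z assume "z \<in> verts G"
    then consider "z \<in> verts skeleton - leaves skeleton" | w where "w \<in> leaves skeleton" "z \<in> D_nbhd (partner w)"
      | "z \<in> P"
      using D_P_cover D_cover_skeleton by blast
    then show "z \<in> vmap ` verts S2_skeleton"
    proof cases
      case 1
      then have "Old z \<in> verts S2_skeleton" by (simp add: verts_S2_iff)
      then show ?thesis by (metis vmap_simps(1) image_eqI)
    next
      case 2
      then obtain i where "i \<in> {1..mult w}" "copy w i = z"
        using bij_copy[of w] by (metis bij_betw_def imageE)
      then have "LCopy w i \<in> verts S2_skeleton" "vmap (LCopy w i) = z"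
        using 2 by (simp_all add: verts_S2_iff)
      then show ?thesis by (metis image_eqI)
    next
      case 3
      then obtain m b where "m \<in> M" "endp G b m = z"
        using bij_endp by (auto simp: bij_betw_def)
      then have "New m b \<in> verts S2_skeleton" "vmap (New m b) = z" by (simp_all add: verts_S2_iff)
      then show ?thesis by (metis image_eqI)
    qed
  qed
qed

lemma adj_vmap_ends:
  assumes "x \<in> edges S2_skeleton"
  shows "adj G (vmap (fst (ends S2_skeleton x))) (vmap (snd (ends S2_skeleton x)))"
proof (cases x)
  case (EMid m)
  then show ?thesis
    using assms joins_endp[of m G True] matching_subset
    by (auto simp: edges_S2_iff adj_iff_joins)
next
  case (EAtt m b)
  then show ?thesis using assms adj_anchor endp_in_P by (simp add: edges_S2_iff)
next
  case (ELeaf m b i)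
  let ?a = "endp G b m"
  have "m \<in> M" "anchor ?a \<in> leaves skeleton" "i \<in> {1..mult (anchor ?a)}"
    using assms ELeaf by (simp_all add: edges_S2_iff)
  moreover have "partner (anchor ?a) = ?a"
    using partner_at_leaf calculation(1,2) endp_in_P by blast
  ultimately show ?thesis using ELeaf copy_in_block mem_D_nbhd by fastforce
qed

lemma joins_emap:
  "x \<in> edges S2_skeleton \<Longrightarrow>
     joins G (emap x) (vmap (fst (ends S2_skeleton x))) (vmap (snd (ends S2_skeleton x)))"
  unfolding emap_def using adj_vmap_ends by (rule joins_link)

lemma edge_has_S2_preimage:
  assumes e: "e \<in> edges G"
  shows "\<exists>x\<in>edges S2_skeleton. joins G e (vmap (fst (ends S2_skeleton x))) (vmap (snd (ends S2_skeleton x)))"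
  using edge_in_matching_or_DP[OF e]
proof
  assume "e \<in> M"
  then show ?thesis
    using joins_endp[OF e, of True] by (intro bexI[of _ "EMid e"]) (simp_all add: edges_S2_iff)
next
  assume "\<exists>d\<in>D. \<exists>a\<in>P. joins G e d a"
  then obtain d a where d: "d \<in> D" and a: "a \<in> P" and e_da: "joins G e d a" by blast
  then obtain m b where m: "m \<in> M" and a_eq: "a = endp G b m"
    using bij_endp by (auto simp: bij_betw_def)
  have "adj G d a" using e_da unfolding adj_iff_joins by blast
  then have d_in: "d \<in> D_nbhd a" using d mem_D_nbhd by blast
  have w: "anchor a \<in> verts skeleton" using a by simp
  show ?thesis
  proof (cases "anchor a \<in> leaves skeleton")
    case False
    then have "d = anchor a" using D_nbhd_at_nonleaf[OF w _ a adj_anchor[OF a]] d_in by blast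
    then show ?thesis
      using e_da m False a_eq by (intro bexI[of _ "EAtt m b"]) (simp_all add: edges_S2_iff)
  next
    case True
    then have "d \<in> D_nbhd (partner (anchor a))" using partner_at_leaf a d_in by simp
    then obtain i where "i \<in> {1..mult (anchor a)}" "copy (anchor a) i = d"
      using bij_copy[of "anchor a"] by (metis bij_betw_def imageE)
    then show ?thesis
      using e_da m True a_eq by (intro bexI[of _ "ELeaf m b i"]) (simp_all add: edges_S2_iff)
  qed
qed

lemma emap_onto: "emap ` edges S2_skeleton = edges G"
proof
  show "emap ` edges S2_skeleton \<subseteq> edges G" using joins_emap unfolding joins_def by blast
  show "edges G \<subseteq> emap ` edges S2_skeleton"
  proof
    fix e assume "e \<in> edges G"
    then obtain x where "x \<in> edges S2_skeleton"
      and "joins G e (vmap (fst (ends S2_skeleton x))) (vmap (snd (ends S2_skeleton x)))"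
      using edge_has_S2_preimage by blast
    then show "e \<in> emap ` edges S2_skeleton"
      using joins_emap no_parallel_edges by (metis image_eqI)
  qed
qed

lemma mg_iso_S2_skeleton: "mg_iso G S2_skeleton"
proof (rule mg_iso_sym[OF wf_mgraph_S2[OF wf_skeleton]])
  have "inj_on emap (edges S2_skeleton)"
  proof (rule inj_on_compatible_edge_map[OF wf_mgraph_S2[OF wf_skeleton] inj_vmap])
    show "x = y" if "ends S2_skeleton x = ends S2_skeleton y \<or>
        ends S2_skeleton x = prod.swap (ends S2_skeleton y)" for x y
      using that ends_S2_inj ends_S2_not_swapped by blast
  qed (rule joins_emap)
  then show "mg_iso S2_skeleton G"
    unfolding mg_iso_def bij_betw_def
    using inj_vmap vmap_onto emap_onto joins_emap unfolding joins_def by blast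
qed

end

theorem theorem4p5:
  fixes G :: "('v,'e) mgraph" and D P :: "'v set"
  assumes "wf_mgraph G" and "minimal_dpdp_graph G" and "dp_pair G D P"
  shows "maximal_independent G D
    \<and> (\<forall>x\<in>P. deg (induced G P) x = 1)
    \<and> (\<forall>x\<in>P. card (nbhd G x - P) = 1 \<or> (nbhd G x - P \<noteq> {} \<and> nbhd G x - P \<subseteq> leaves G))
    \<and> (\<exists>(H :: ('v,'e) mgraph) \<alpha>. wf_mgraph H \<and> no_isolated H \<and>
           (\<forall>v\<in>leaves H. 1 \<le> \<alpha> v) \<and> mg_iso G (S2 H \<alpha>))"
proof -
  obtain M where "perfect_matching_induced G P M"
    using assms(3) unfolding dp_pair_def paired_dominating_def by blast
  with assms interpret minimal_dp_pair G D P M by unfold_locales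
  show ?thesis
    using maximal_independent_D deg_induced_P nbhd_minus_P_single_or_leaves
      wf_skeleton no_isolated_skeleton mult_pos mg_iso_S2_skeleton by blast
qed

end
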